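(* For $i=1,\dots,d$ let $K_i(z,z')=f_i(z)f_i(z')g_i(zz')$ be an interpretable Taylor kernel on a connected domain $\mathcal{X}_i\subseteq\mathbb{R}$, and let $K(x,y)=\prod_{i=1}^d K_i(x_i,y_i)$ on $\mathcal{X}=\mathcal{X}_1\times\dots\times\mathcal{X}_d$. Fix an integer $M\ge 0$ and let $\phi_{i,j}(z)=z^j f_i(z)\sqrt{g_i^{(j)}(0)/j!}$ for $i\in[d]$, $0\le j\le M$ (the surrogate features of order $M$). Then threshold cuts on surrogate features yield interpretable splits: for every finite set $S\subset\mathcal{X}$, every $i\in[d]$, $0\le j\le M$ and $\theta\in\mathbb{R}$, the partition of $S$ into $\{x\in S:\phi_{i,j}(x_i)\le\theta\}$ and $\{x\in S:\phi_{i,j}(x_i)>\theta\}$ is of the form $\{x\in S: x_i\in[\theta_1,\theta_2]\}$ and $\{x\in S:x_i\notin[\theta_1,\theta_2]\}$ for some real $\theta_1<\theta_2$ (in some order of the two parts). Consequently, any decision tree on a finite dataset in $\mathcal{X}$ whose internal nodes split the data by threshold cuts $\phi_{i,j}(x_i)\le\theta$ versus $\phi_{i,j}(x_i)>\theta$ is an interpretable decision tree.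
   Context: An interpretable Taylor kernel is a bounded kernel $K_i$ on a connected domain $\mathcal{X}_i\subseteq\mathbb{R}$ of the form $K_i(z,z')=f(z)f(z')g(zz')$ with $f$ differentiable and $g$ analytic, such that $g^{(j)}(0)\ge 0$ for all $j\in\mathbb{N}$ ($g^{(j)}$ the $j$-th derivative) and such that for every $j\in\mathbb{N}$ the equation $z^{j-1}(zf'(z)+jf(z))=0$ has at most one solution $z\in\mathcal{X}_i$. An interpretable decision tree on a dataset $X\subset\mathbb{R}^d$ is a binary tree partitioning $X$ in which at every internal node $u$, receiving data $X^u$, there exist $i\in[d]$ and real $\theta_1<\theta_2$ such that $X^u$ is split into $\{x\in X^u:x_i\in[\theta_1,\theta_2]\}$ and $\{x\in X^u:x_i\notin[\theta_1,\theta_2]\}$. *)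

theory Defs
  imports "HOL-Analysis.Analysis"
begin

definition real_analytic_on :: "(real \<Rightarrow> real) \<Rightarrow> real set \<Rightarrow> bool" where
  "real_analytic_on g A \<longleftrightarrow>
     (\<forall>x\<in>A. \<exists>r>0. \<exists>c::nat \<Rightarrow> real. \<forall>y. \<bar>y - x\<bar> < r \<longrightarrow> (\<lambda>n. c n * (y - x) ^ n) sums g y)"

definition bounded_kernel :: "'a set \<Rightarrow> ('a \<Rightarrow> 'a \<Rightarrow> real) \<Rightarrow> bool" where
  "bounded_kernel A k \<longleftrightarrow>
     (\<forall>x\<in>A. \<forall>y\<in>A. k x y = k y x) \<and>
     (\<forall>xs cs. set xs \<subseteq> A \<longrightarrow> length cs = length xs \<longrightarrow>
        (\<Sum>a<length xs. \<Sum>b<length xs. cs ! a * cs ! b * k (xs ! a) (xs ! b)) \<ge> 0) \<and>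
     (\<exists>B. \<forall>x\<in>A. \<forall>y\<in>A. \<bar>k x y\<bar> \<le> B)"

text \<open>The expression z^(j-1) (z f'(z) + j f(z)), i.e. the derivative of z^j f(z);
  for j = 0 this is read as f'(z).\<close>
definition taylor_crit :: "(real \<Rightarrow> real) \<Rightarrow> nat \<Rightarrow> real \<Rightarrow> real" where
  "taylor_crit f j z =
     (if j = 0 then deriv f z else z ^ (j - 1) * (z * deriv f z + real j * f z))"

definition interpretable_taylor_kernel ::
  "real set \<Rightarrow> (real \<Rightarrow> real) \<Rightarrow> (real \<Rightarrow> real) \<Rightarrow> bool" where
  "interpretable_taylor_kernel X f g \<longleftrightarrow>
     connected X \<and>
     bounded_kernel X (\<lambda>z z'. f z * f z' * g (z * z')) \<and>
     (\<forall>z\<in>X. f differentiable (at z)) \<and>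
     (\<exists>U. open U \<and> 0 \<in> U \<and> {z * z' | z z'. z \<in> X \<and> z' \<in> X} \<subseteq> U \<and> real_analytic_on g U) \<and>
     (\<forall>j. (deriv ^^ j) g 0 \<ge> 0) \<and>
     (\<forall>j. \<forall>z1\<in>X. \<forall>z2\<in>X. taylor_crit f j z1 = 0 \<longrightarrow> taylor_crit f j z2 = 0 \<longrightarrow> z1 = z2)"

definition surrogate_feature ::
  "('d \<Rightarrow> real \<Rightarrow> real) \<Rightarrow> ('d \<Rightarrow> real \<Rightarrow> real) \<Rightarrow> 'd \<Rightarrow> nat \<Rightarrow> real \<Rightarrow> real" where
  "surrogate_feature f g i j z = z ^ j * f i z * sqrt ((deriv ^^ j) (g i) 0 / fact j)"

datatype 'a dtree = Leaf | Node "'a \<Rightarrow> bool" "'a dtree" "'a dtree"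

definition interpretable_split :: "(real ^ 'd) set \<Rightarrow> ((real ^ 'd) \<Rightarrow> bool) \<Rightarrow> bool" where
  "interpretable_split S P \<longleftrightarrow>
     (\<exists>i t1 t2. t1 < t2 \<and>
       (({x\<in>S. P x} = {x\<in>S. x $ i \<in> {t1..t2}} \<and> {x\<in>S. \<not> P x} = {x\<in>S. x $ i \<notin> {t1..t2}}) \<or>
        ({x\<in>S. \<not> P x} = {x\<in>S. x $ i \<in> {t1..t2}} \<and> {x\<in>S. P x} = {x\<in>S. x $ i \<notin> {t1..t2}})))"

fun interpretable_dtree :: "(real ^ 'd) set \<Rightarrow> (real ^ 'd) dtree \<Rightarrow> bool" where
  "interpretable_dtree S Leaf = True"
| "interpretable_dtree S (Node P l r) =
     (interpretable_split S P \<and> interpretable_dtree {x\<in>S. P x} l \<and> interpretable_dtree {x\<in>S. \<not> P x} r)"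

fun threshold_dtree ::
  "('d \<Rightarrow> nat \<Rightarrow> real \<Rightarrow> real) \<Rightarrow> nat \<Rightarrow> (real ^ 'd) dtree \<Rightarrow> bool" where
  "threshold_dtree \<phi> M Leaf = True"
| "threshold_dtree \<phi> M (Node P l r) =
     ((\<exists>i j \<theta>. j \<le> M \<and> P = (\<lambda>x. \<phi> i j (x $ i) \<le> \<theta>)) \<and>
      threshold_dtree \<phi> M l \<and> threshold_dtree \<phi> M r)"

end

theory Submission
  imports Defs
begin

text \<open>Up to the constant factor sqrt (g^(j)(0) / j!), the surrogate feature z^j f(z) has
  derivative z^(j-1) (z f'(z) + j f(z)), which vanishes at most once on the connected domain
  (if the factor is zero, the feature is constant). A differentiable function with at most one
  critical point cannot have both an interior peak and an interior valley, so for every threshold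
  the sublevel set {phi \<le> theta} or the superlevel set {phi > theta} is an interval. On a finite
  sample an interval cuts out the same points as a suitable nondegenerate closed interval
  [t1, t2], and this is an interpretable split; trees follow by induction.\<close>

lemma interior_peak_critical_point:
  fixes h h' :: "real \<Rightarrow> real"
  assumes der: "\<And>z. a \<le> z \<Longrightarrow> z \<le> c \<Longrightarrow> (h has_real_derivative h' z) (at z)"
    and "a \<le> b" "b \<le> c" "h a < h b" "h c < h b"
  shows "\<exists>p. a < p \<and> p < c \<and> h' p = 0 \<and> h b \<le> h p"
proof -
  have "continuous_on {a..c} h"
    using der by (intro continuous_at_imp_continuous_on ballI DERIV_isCont) auto
  then obtain p where p: "a \<le> p" "p \<le> c" and max: "\<And>y. a \<le> y \<Longrightarrow> y \<le> c \<Longrightarrow> h y \<le> h p"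
    using continuous_attains_sup[of "{a..c}" h] assms by auto
  have "h b \<le> h p" using max assms by simp
  with assms p have "a < p" "p < c" by (auto simp: less_le)
  have "\<forall>y. \<bar>p - y\<bar> < min (p - a) (c - p) \<longrightarrow> h y \<le> h p"
    by (auto simp: abs_if intro: max)
  from DERIV_local_max[OF der[OF p] _ this] have "h' p = 0"
    using \<open>a < p\<close> \<open>p < c\<close> by simp
  with \<open>a < p\<close> \<open>p < c\<close> \<open>h b \<le> h p\<close> show ?thesis by blast
qed

lemma interior_valley_critical_point:
  fixes h h' :: "real \<Rightarrow> real"
  assumes der: "\<And>z. a \<le> z \<Longrightarrow> z \<le> c \<Longrightarrow> (h has_real_derivative h' z) (at z)"
    and "a \<le> b" "b \<le> c" "h b < h a" "h b < h c"
  shows "\<exists>p. a < p \<and> p < c \<and> h' p = 0 \<and> h p \<le> h b"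
  using interior_peak_critical_point[of a c "\<lambda>z. - h z" "\<lambda>z. - h' z" b] assms
  by (auto intro: DERIV_minus)

lemma level_sets_is_interval_if_unique_critical_point:
  fixes h h' :: "real \<Rightarrow> real"
  assumes "connected X"
    and der: "\<And>z. z \<in> X \<Longrightarrow> (h has_real_derivative h' z) (at z)"
    and unique: "\<And>p q. p \<in> X \<Longrightarrow> q \<in> X \<Longrightarrow> h' p = 0 \<Longrightarrow> h' q = 0 \<Longrightarrow> p = q"
  shows "is_interval {z\<in>X. h z \<le> \<theta>} \<or> is_interval {z\<in>X. h z > \<theta>}"
proof (rule ccontr)
  have between: "z \<in> X" if "a \<in> X" "c \<in> X" "a \<le> z" "z \<le> c" for a c z
    using connected_contains_Icc[OF \<open>connected X\<close>, of a c] that by auto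
  assume "\<not> ?thesis"
  then have "\<not> is_interval {z\<in>X. h z \<le> \<theta>}" "\<not> is_interval {z\<in>X. h z > \<theta>}" by simp_all
  then obtain a b c a' b' c' where
      sub: "a \<in> X" "c \<in> X" "a \<le> b" "b \<le> c" "h a \<le> \<theta>" "h c \<le> \<theta>" "b \<notin> {z\<in>X. h z \<le> \<theta>}"
    and super: "a' \<in> X" "c' \<in> X" "a' \<le> b'" "b' \<le> c'" "h a' > \<theta>" "h c' > \<theta>" "b' \<notin> {z\<in>X. h z > \<theta>}"
    unfolding is_interval_1 Ball_def mem_Collect_eq by blast
  have "b \<in> X" "b' \<in> X" using between sub super by blast+
  then have "h b > \<theta>" "h b' \<le> \<theta>"
    using sub super by auto
  then have "h a < h b" "h c < h b" "h b' < h a'" "h b' < h c'"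
    using sub super by auto
  have der_sub: "(h has_real_derivative h' z) (at z)" if "a \<le> z" "z \<le> c" for z
    using der between sub(1,2) that by blast
  have der_super: "(h has_real_derivative h' z) (at z)" if "a' \<le> z" "z \<le> c'" for z
    using der between super(1,2) that by blast
  obtain p where p: "a < p" "p < c" "h' p = 0" "h b \<le> h p"
    using interior_peak_critical_point[OF der_sub] sub \<open>h a < h b\<close> \<open>h c < h b\<close> by blast
  obtain q where q: "a' < q" "q < c'" "h' q = 0" "h q \<le> h b'"
    using interior_valley_critical_point[OF der_super] super \<open>h b' < h a'\<close> \<open>h b' < h c'\<close> by blast
  have "p \<in> X" "q \<in> X"
    using between sub super p q by (meson less_imp_le)+
  with unique p q have "p = q" by blast
  with p q \<open>h b > \<theta>\<close> \<open>h b' \<le> \<theta>\<close> show False by auto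
qed

lemma finite_Int_interval_eq_Int_Icc:
  fixes W C :: "real set"
  assumes "finite W" "is_interval C"
  shows "\<exists>t1 t2. t1 < t2 \<and> W \<inter> C = W \<inter> {t1..t2}"
proof (cases "W \<inter> C = {}")
  case True
  define t where "t = Max (insert 0 W) + 1"
  have "w < t" if "w \<in> W" for w
  proof -
    have "w \<le> Max (insert 0 W)"
      using \<open>finite W\<close> that by (intro Max_ge) auto
    then show ?thesis by (simp add: t_def)
  qed
  then have "W \<inter> {t..t + 1} = {}"
    by fastforce
  with True show ?thesis
    by (intro exI[of _ t] exI[of _ "t + 1"]) simp
next
  case False
  define a b where "a = Min (W \<inter> C)" and "b = Max (W \<inter> C)"
  have fin: "finite (W \<inter> C)" using \<open>finite W\<close> by simp
  have "a \<in> W \<inter> C" "b \<in> W \<inter> C"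
    unfolding a_def b_def using Min_in Max_in fin False by blast+
  have lower: "a \<le> w" and upper: "w \<le> b" if "w \<in> W \<inter> C" for w
    unfolding a_def b_def using fin that by simp_all
  obtain \<delta> where "\<delta> > 0" and \<delta>: "\<And>w. w \<in> W \<Longrightarrow> w \<noteq> b \<Longrightarrow> \<delta> \<le> dist b w"
    using finite_set_avoid[OF \<open>finite W\<close>, of b] by blast
  have gap: "w \<le> b" if "w \<in> W" "w \<le> b + \<delta> / 2" for w
  proof (rule ccontr)
    assume "\<not> w \<le> b"
    with \<delta>[OF that(1)] that(2) \<open>\<delta> > 0\<close> show False
      by (simp add: dist_real_def)
  qed
  have "w \<in> C" if "w \<in> W" "a \<le> w" "w \<le> b" for w
    using \<open>is_interval C\<close> \<open>a \<in> W \<inter> C\<close> \<open>b \<in> W \<inter> C\<close> that unfolding is_interval_1 by blast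
  with lower upper gap \<open>\<delta> > 0\<close> have "W \<inter> C = W \<inter> {a..b + \<delta> / 2}"
    by fastforce
  moreover have "a < b + \<delta> / 2"
    using lower[OF \<open>b \<in> W \<inter> C\<close>] \<open>\<delta> > 0\<close> by simp
  ultimately show ?thesis by blast
qed

lemma has_real_derivative_taylor_crit:
  assumes "f differentiable (at z)"
  shows "((\<lambda>z. z ^ j * f z) has_real_derivative taylor_crit f j z) (at z)"
proof -
  have "(f has_real_derivative deriv f z) (at z)"
    using assms DERIV_deriv_iff_real_differentiable by blast
  then have "((\<lambda>z. z ^ j * f z) has_real_derivative real j * z ^ (j - 1) * f z + deriv f z * z ^ j) (at z)"
    using DERIV_mult[OF DERIV_pow] by simp
  moreover have "real j * z ^ (j - 1) * f z + deriv f z * z ^ j = taylor_crit f j z"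
    by (cases j) (simp_all add: taylor_crit_def algebra_simps)
  ultimately show ?thesis by simp
qed

lemma surrogate_feature_level_sets_is_interval:
  assumes "interpretable_taylor_kernel X (f i) (g i)"
  shows "is_interval {z\<in>X. surrogate_feature f g i j z \<le> \<theta>}
       \<or> is_interval {z\<in>X. surrogate_feature f g i j z > \<theta>}"
proof -
  define c where "c = sqrt ((deriv ^^ j) (g i) 0 / fact j)"
  have \<phi>: "surrogate_feature f g i j = (\<lambda>z. z ^ j * f i z * c)"
    by (simp add: surrogate_feature_def c_def fun_eq_iff)
  from assms have "connected X" and diff: "\<And>z. z \<in> X \<Longrightarrow> f i differentiable (at z)"
    and unique: "\<And>p q. p \<in> X \<Longrightarrow> q \<in> X \<Longrightarrow> taylor_crit (f i) j p = 0 \<Longrightarrow>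
                   taylor_crit (f i) j q = 0 \<Longrightarrow> p = q"
    unfolding interpretable_taylor_kernel_def by blast+
  show ?thesis
  proof (cases "c = 0")
    case True
    then have "{z\<in>X. surrogate_feature f g i j z \<le> \<theta>} = (if 0 \<le> \<theta> then X else {})"
      by (simp add: \<phi>)
    with \<open>connected X\<close> show ?thesis by (simp add: is_interval_connected_1)
  next
    case False
    have "(surrogate_feature f g i j has_real_derivative taylor_crit (f i) j z * c) (at z)"
      if "z \<in> X" for z
      unfolding \<phi> using DERIV_cmult_right has_real_derivative_taylor_crit diff[OF that] by blast
    with False show ?thesis
      by (intro level_sets_is_interval_if_unique_critical_point[OF \<open>connected X\<close>]) (auto intro: unique)
  qed
qed

lemma finite_split_by_interval_eq_split_by_Icc:
  fixes S :: "(real ^ 'd) set"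
  assumes "finite S" "\<forall>x\<in>S. x $ i \<in> X" "is_interval {z\<in>X. P z}"
  shows "\<exists>t1 t2. t1 < t2 \<and> {x\<in>S. P (x $ i)} = {x\<in>S. x $ i \<in> {t1..t2}}
                          \<and> {x\<in>S. \<not> P (x $ i)} = {x\<in>S. x $ i \<notin> {t1..t2}}"
proof -
  obtain t1 t2 where "t1 < t2"
    and eq: "(\<lambda>x. x $ i) ` S \<inter> {z\<in>X. P z} = (\<lambda>x. x $ i) ` S \<inter> {t1..t2}"
    using finite_Int_interval_eq_Int_Icc[of "(\<lambda>x. x $ i) ` S"] assms by blast
  have "P (x $ i) \<longleftrightarrow> x $ i \<in> {t1..t2}" if "x \<in> S" for x
    using eq that assms(2) by blast
  with \<open>t1 < t2\<close> show ?thesis by blast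
qed

lemma threshold_cut_eq_split_by_Icc:
  fixes S :: "(real ^ 'd) set" and h :: "real \<Rightarrow> real"
  assumes "finite S" "\<forall>x\<in>S. x $ i \<in> X"
    and "is_interval {z\<in>X. h z \<le> \<theta>} \<or> is_interval {z\<in>X. h z > \<theta>}"
  shows "\<exists>t1 t2. t1 < t2 \<and>
           (({x\<in>S. h (x $ i) \<le> \<theta>} = {x\<in>S. x $ i \<in> {t1..t2}} \<and>
             {x\<in>S. h (x $ i) > \<theta>} = {x\<in>S. x $ i \<notin> {t1..t2}}) \<or>
            ({x\<in>S. h (x $ i) > \<theta>} = {x\<in>S. x $ i \<in> {t1..t2}} \<and>
             {x\<in>S. h (x $ i) \<le> \<theta>} = {x\<in>S. x $ i \<notin> {t1..t2}}))"
  using assms(3)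
proof
  assume "is_interval {z\<in>X. h z \<le> \<theta>}"
  from finite_split_by_interval_eq_split_by_Icc[OF assms(1,2) this] show ?thesis
    by (auto simp: not_le)
next
  assume "is_interval {z\<in>X. h z > \<theta>}"
  from finite_split_by_interval_eq_split_by_Icc[OF assms(1,2) this] show ?thesis
    by (auto simp: not_less)
qed

lemma surrogate_threshold_cut_eq_split_by_Icc:
  fixes X :: "'d::finite \<Rightarrow> real set" and S :: "(real ^ 'd) set"
  assumes "interpretable_taylor_kernel (X i) (f i) (g i)"
    and "finite S" "S \<subseteq> {x. \<forall>k. x $ k \<in> X k}"
  shows "\<exists>t1 t2. t1 < t2 \<and>
           (({x\<in>S. surrogate_feature f g i j (x $ i) \<le> \<theta>} = {x\<in>S. x $ i \<in> {t1..t2}} \<and>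
             {x\<in>S. surrogate_feature f g i j (x $ i) > \<theta>} = {x\<in>S. x $ i \<notin> {t1..t2}}) \<or>
            ({x\<in>S. surrogate_feature f g i j (x $ i) > \<theta>} = {x\<in>S. x $ i \<in> {t1..t2}} \<and>
             {x\<in>S. surrogate_feature f g i j (x $ i) \<le> \<theta>} = {x\<in>S. x $ i \<notin> {t1..t2}}))"
proof (rule threshold_cut_eq_split_by_Icc[OF \<open>finite S\<close>])
  show "\<forall>x\<in>S. x $ i \<in> X i" using assms(3) by blast
  show "is_interval {z\<in>X i. surrogate_feature f g i j z \<le> \<theta>}
      \<or> is_interval {z\<in>X i. surrogate_feature f g i j z > \<theta>}"
    using assms(1) by (rule surrogate_feature_level_sets_is_interval)
qed

lemma interpretable_dtree_if_threshold_cuts_interpretable: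
  assumes "threshold_dtree \<phi> M T"
    and "\<And>S' i j \<theta>. S' \<subseteq> S \<Longrightarrow> j \<le> M \<Longrightarrow> interpretable_split S' (\<lambda>x. \<phi> i j (x $ i) \<le> \<theta>)"
  shows "interpretable_dtree S T"
  using assms
proof (induction T arbitrary: S)
  case Leaf
  then show ?case by simp
next
  case (Node P l r)
  then obtain i j \<theta> where "j \<le> M" "P = (\<lambda>x. \<phi> i j (x $ i) \<le> \<theta>)"
    and "threshold_dtree \<phi> M l" "threshold_dtree \<phi> M r"
    by auto
  with Node.prems(2) have "interpretable_split S P" by blast
  have cut_subset: "interpretable_split S' (\<lambda>x. \<phi> i j (x $ i) \<le> \<theta>)"
    if "S' \<subseteq> {x\<in>S. Q x}" "j \<le> M" for S' Q i j \<theta>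
    using that by (intro Node.prems(2)) auto
  have "interpretable_dtree {x\<in>S. P x} l"
    using Node.IH(1)[OF \<open>threshold_dtree \<phi> M l\<close> cut_subset] .
  moreover have "interpretable_dtree {x\<in>S. \<not> P x} r"
    using Node.IH(2)[OF \<open>threshold_dtree \<phi> M r\<close> cut_subset] .
  ultimately show ?case
    using \<open>interpretable_split S P\<close> by simp
qed

theorem theorem3:
  fixes X :: "'d::finite \<Rightarrow> real set"
    and f g :: "'d \<Rightarrow> real \<Rightarrow> real"
    and M :: nat
  assumes itk: "\<And>i. interpretable_taylor_kernel (X i) (f i) (g i)"
  shows "(\<forall>S i j \<theta>. finite S \<longrightarrow> S \<subseteq> {x :: real ^ 'd. \<forall>k. x $ k \<in> X k} \<longrightarrow> j \<le> M \<longrightarrow>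
            (\<exists>t1 t2. t1 < t2 \<and>
              (({x\<in>S. surrogate_feature f g i j (x $ i) \<le> \<theta>} = {x\<in>S. x $ i \<in> {t1..t2}} \<and>
                {x\<in>S. surrogate_feature f g i j (x $ i) > \<theta>} = {x\<in>S. x $ i \<notin> {t1..t2}}) \<or>
               ({x\<in>S. surrogate_feature f g i j (x $ i) > \<theta>} = {x\<in>S. x $ i \<in> {t1..t2}} \<and>
                {x\<in>S. surrogate_feature f g i j (x $ i) \<le> \<theta>} = {x\<in>S. x $ i \<notin> {t1..t2}}))))
       \<and> (\<forall>S T. finite S \<longrightarrow> S \<subseteq> {x :: real ^ 'd. \<forall>k. x $ k \<in> X k} \<longrightarrow>
            threshold_dtree (surrogate_feature f g) M T \<longrightarrow> interpretable_dtree S T)"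
proof -
  note cut = surrogate_threshold_cut_eq_split_by_Icc[where X = X and f = f and g = g, OF itk]
  have split: "interpretable_split S' (\<lambda>x. surrogate_feature f g i j (x $ i) \<le> \<theta>)"
    if "finite S" "S \<subseteq> {x. \<forall>k. x $ k \<in> X k}" "S' \<subseteq> S" for S S' :: "(real ^ 'd) set" and i j \<theta>
  proof -
    have "finite S'" "S' \<subseteq> {x. \<forall>k. x $ k \<in> X k}"
      using that finite_subset by blast+
    from cut[OF this] show ?thesis
      unfolding interpretable_split_def not_le by blast
  qed
  show ?thesis
  proof (intro conjI allI impI cut)
    fix S :: "(real ^ 'd) set" and T
    assume "finite S" "S \<subseteq> {x. \<forall>k. x $ k \<in> X k}"
      and "threshold_dtree (surrogate_feature f g) M T"
    then show "interpretable_dtree S T"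
      using interpretable_dtree_if_threshold_cuts_interpretable split by blast
  qed
qed

end
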